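(* Let $\Delta$ be a simplicial polytopal fan in $\mathbb{R}^d$ with ray generators $\mathbf{v}_1,\ldots,\mathbf{v}_n$. For all polytopes $P(\mathbf{h}),P(\mathbf{h}')\in\mathcal{P}(\Delta)$, \[ d_H(P(\mathbf{h}),P(\mathbf{h}'))\le\sqrt{d}\,c^\Delta\,\|\mathbf{h}-\mathbf{h}'\|. \]
   Context: A fan is simplicial if every cone is generated by linearly independent vectors; polytopal if it is the normal fan of a polytope. For $\mathbf{h}\in\mathbb{R}^n$, $P(\mathbf{h})=\{\mathbf{x}\colon\langle\mathbf{x},\mathbf{v}_i\rangle\le h_i\ \forall i\}$. The deformation cone $\mathcal{P}(\Delta)$ is the set of polytopes whose normal fan is coarsened by $\Delta$, identified via support vectors $\mathbf{h}=(h_P(\mathbf{v}_i))_i$ with a closed polyhedral cone in $\mathbb{R}^n$. For $\mathbf{u}\in\mathbb{R}^d$, with $\sigma$ the cone of $\Delta$ containing $\mathbf{u}$ in its relative interior and $\mathbf{u}=\sum_{k\in I_\sigma}\lambda_k\mathbf{v}_k$ over the generators of $\sigma$, set $[\mathbf{u}]_i=\lambda_i$ for $i\in I_\sigma$ and $0$ otherwise. $c^\Delta=\max_{\mathbf{u}\in\mathbb{S}^{d-1}}\max_{1\le i\le n}[\mathbf{u}]_i$. $d_H$ is the Hausdorff distance. *)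

theory Defs
  imports "HOL-Analysis.Analysis"
begin

definition hausdorff_dist :: "'a::metric_space set \<Rightarrow> 'a set \<Rightarrow> real" where
  "hausdorff_dist A B = max (SUP a\<in>A. infdist a B) (SUP b\<in>B. infdist b A)"

definition fan :: "'a::euclidean_space set set \<Rightarrow> bool" where
  "fan \<Delta> \<longleftrightarrow> finite \<Delta> \<and> \<Delta> \<noteq> {} \<and>
     (\<forall>C\<in>\<Delta>. polyhedron C \<and> convex_cone C) \<and>
     (\<forall>C\<in>\<Delta>. \<forall>F. F face_of C \<and> F \<noteq> {} \<longrightarrow> F \<in> \<Delta>) \<and>
     (\<forall>C\<in>\<Delta>. \<forall>C'\<in>\<Delta>. (C \<inter> C') face_of C \<and> (C \<inter> C') face_of C')"

definition simplicial_fan :: "'a::euclidean_space set set \<Rightarrow> bool" where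
  "simplicial_fan \<Delta> \<longleftrightarrow> fan \<Delta> \<and>
     (\<forall>C\<in>\<Delta>. \<exists>B. finite B \<and> independent B \<and> C = convex_cone hull B)"

definition normal_cone :: "'a::euclidean_space set \<Rightarrow> 'a set \<Rightarrow> 'a set" where
  "normal_cone Q F = {c. \<forall>x\<in>F. \<forall>y\<in>Q. inner c y \<le> inner c x}"

definition normal_fan :: "'a::euclidean_space set \<Rightarrow> 'a set set" where
  "normal_fan Q = {normal_cone Q F | F. F face_of Q \<and> F \<noteq> {}}"

definition polytopal_fan :: "'a::euclidean_space set set \<Rightarrow> bool" where
  "polytopal_fan \<Delta> \<longleftrightarrow> (\<exists>Q. polytope Q \<and> Q \<noteq> {} \<and> \<Delta> = normal_fan Q)"

definition ray_generators :: "'a::euclidean_space set set \<Rightarrow> ('n \<Rightarrow> 'a) \<Rightarrow> bool" where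
  "ray_generators \<Delta> v \<longleftrightarrow> (\<forall>i. v i \<noteq> 0) \<and>
     inj (\<lambda>i. convex_cone hull {v i}) \<and>
     {C\<in>\<Delta>. aff_dim C = 1} = range (\<lambda>i. convex_cone hull {v i})"

definition refines :: "'a set set \<Rightarrow> 'a set set \<Rightarrow> bool" where
  "refines \<Delta> \<Delta>' \<longleftrightarrow> (\<forall>C\<in>\<Delta>. \<exists>C'\<in>\<Delta>'. C \<subseteq> C') \<and> \<Union>\<Delta> = \<Union>\<Delta>'"

definition support_fun :: "'a::euclidean_space set \<Rightarrow> 'a \<Rightarrow> real" where
  "support_fun P u = (SUP x\<in>P. inner x u)"

definition Ph :: "('n::finite \<Rightarrow> 'a::euclidean_space) \<Rightarrow> real^'n \<Rightarrow> 'a set" where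
  "Ph v h = {x. \<forall>i. inner x (v i) \<le> h $ i}"

definition deformation_cone :: "'a::euclidean_space set set \<Rightarrow> ('n::finite \<Rightarrow> 'a) \<Rightarrow> (real^'n) set" where
  "deformation_cone \<Delta> v = {h. \<exists>P. polytope P \<and> P \<noteq> {} \<and> refines \<Delta> (normal_fan P) \<and>
       (\<forall>i. h $ i = support_fun P (v i))}"

text \<open>[u]_i: coefficient of v i in the expansion of u over the generators of the cone
  containing u in its relative interior (0 if v i is not a generator of that cone).\<close>
definition fan_coord :: "'a::euclidean_space set set \<Rightarrow> ('n::finite \<Rightarrow> 'a) \<Rightarrow> 'a \<Rightarrow> 'n \<Rightarrow> real" where
  "fan_coord \<Delta> v u i =
     (let \<sigma> = (THE \<sigma>. \<sigma> \<in> \<Delta> \<and> u \<in> rel_interior \<sigma>);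
          I = {k. v k \<in> \<sigma>};
          lam = (THE lam. (\<forall>k. k \<notin> I \<longrightarrow> lam k = 0) \<and> u = (\<Sum>k\<in>I. lam k *\<^sub>R v k))
      in lam i)"

definition fan_const :: "'a::euclidean_space set set \<Rightarrow> ('n::finite \<Rightarrow> 'a) \<Rightarrow> real" where
  "fan_const \<Delta> v = Sup {fan_coord \<Delta> v u i | u i. norm u = 1}"

end

theory Submission
  imports Defs
begin

(* For compact convex sets, the Hausdorff distance is at most the supremum over unit
   directions u of the difference of the support functions. If P(h) lies in the deformation
   cone of Delta, some face of P(h) is normal to all of a cone sigma of Delta, so the support
   function of P(h) is linear on sigma and h_P(u) = sum_i [u]_i h_i = <[u], h>. Hence the
   support functions of P(h) and P(h') differ at u by <[u], h - h'>, which Cauchy-Schwarz bounds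
   by |[u]| |h - h'|. Each entry of [u] lies in [0, c^Delta], and at most d of them are nonzero
   because the generators of a simplicial cone are linearly independent; so |[u]| <= sqrt d c^Delta. *)

section \<open>Convex cones spanned by finite sets\<close>

lemma convex_cone_hull_sum:
  fixes w :: "'k \<Rightarrow> 'a::real_vector"
  assumes "\<forall>k\<in>K. 0 \<le> c k" and "\<forall>k\<in>K. w k \<in> S"
  shows "(\<Sum>k\<in>K. c k *\<^sub>R w k) \<in> convex_cone hull S"
proof (cases "finite K")
  case True
  then show ?thesis
    using assms
    by (induction K rule: finite_induct)
      (auto intro: convex_cone_hull_contains_0 convex_cone_hull_add convex_cone_hull_mul hull_inc)
qed (simp add: convex_cone_hull_contains_0)

lemma convex_cone_hull_finite:
  fixes B :: "'a::real_vector set"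
  assumes "finite B"
  shows "convex_cone hull B = {\<Sum>b\<in>B. \<mu> b *\<^sub>R b | \<mu>. \<forall>b\<in>B. 0 \<le> \<mu> b}"
proof
  show "convex_cone hull B \<subseteq> {\<Sum>b\<in>B. \<mu> b *\<^sub>R b | \<mu>. \<forall>b\<in>B. 0 \<le> \<mu> b}"
  proof
    fix u assume "u \<in> convex_cone hull B"
    then consider "u = 0" | x c where "x \<in> convex hull B" "0 \<le> c" "u = c *\<^sub>R x"
      unfolding convex_cone_hull_convex_hull by blast
    then show "u \<in> {\<Sum>b\<in>B. \<mu> b *\<^sub>R b | \<mu>. \<forall>b\<in>B. 0 \<le> \<mu> b}"
    proof cases
      case 1
      then show ?thesis by (auto intro!: exI[of _ "\<lambda>_. 0"])
    next
      case (2 x c)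
      then obtain w where "\<forall>b\<in>B. 0 \<le> w b" "x = (\<Sum>b\<in>B. w b *\<^sub>R b)"
        unfolding convex_hull_finite[OF assms] by blast
      with 2 show ?thesis
        by (auto simp: scaleR_sum_right intro!: exI[of _ "\<lambda>b. c * w b"])
    qed
  qed
qed (auto intro: convex_cone_hull_sum[where w = id, simplified])

lemma convex_cone_hull_singleton: "convex_cone hull {b} = {t *\<^sub>R b | t. 0 \<le> t}"
  by (auto simp: convex_cone_hull_finite)

lemma convex_cone_hull_subset_span: "convex_cone hull S \<subseteq> span S"
  by (simp add: convex_cone_span hull_minimal span_superset)

lemma convex_cone_hull_singleton_scaleR:
  assumes "0 < c"
  shows "convex_cone hull {c *\<^sub>R b} = convex_cone hull {b}"
proof -
  have "(\<exists>t\<ge>0. x = t *\<^sub>R (c *\<^sub>R b)) \<longleftrightarrow> (\<exists>s\<ge>0. x = s *\<^sub>R b)" for x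
  proof
    assume "\<exists>t\<ge>0. x = t *\<^sub>R (c *\<^sub>R b)"
    then obtain t where "0 \<le> t" "x = (t * c) *\<^sub>R b" by auto
    then show "\<exists>s\<ge>0. x = s *\<^sub>R b" using assms by (intro exI[of _ "t * c"]) simp
  next
    assume "\<exists>s\<ge>0. x = s *\<^sub>R b"
    then obtain s where "0 \<le> s" "x = (s / c) *\<^sub>R (c *\<^sub>R b)" using assms by auto
    then show "\<exists>t\<ge>0. x = t *\<^sub>R (c *\<^sub>R b)" using assms by (intro exI[of _ "s / c"]) simp
  qed
  then show ?thesis unfolding convex_cone_hull_singleton by blast
qed

lemma aff_dim_convex_cone_hull_singleton:
  fixes b :: "'a::euclidean_space"
  assumes "b \<noteq> 0"
  shows "aff_dim (convex_cone hull {b}) = 1"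
proof -
  have "aff_dim {0, b} \<le> aff_dim (convex_cone hull {b})"
    by (intro aff_dim_subset) (simp add: convex_cone_hull_contains_0 hull_inc)
  moreover have "aff_dim (convex_cone hull {b}) \<le> aff_dim (affine hull {0, b})"
  proof (intro aff_dim_subset subsetI)
    fix x assume "x \<in> convex_cone hull {b}"
    then obtain t where "x = t *\<^sub>R b" by (auto simp: convex_cone_hull_singleton)
    then show "x \<in> affine hull {0, b}"
      unfolding affine_hull_2 by (intro CollectI exI[of _ "1 - t"] exI[of _ t]) simp
  qed
  ultimately show ?thesis using assms by (simp add: aff_dim_affine_hull)
qed

lemma face_of_conic_add:
  fixes S :: "'a::euclidean_space set"
  assumes "F face_of S" "conic S" "y \<in> S" "z \<in> S" "y + z \<in> F"
  shows "y \<in> F"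
proof -
  have "2 *\<^sub>R y \<in> F"
  proof (cases "y = z")
    case True
    then show ?thesis using assms(5) by (simp add: scaleR_2)
  next
    case False
    have "2 *\<^sub>R y \<in> S" "2 *\<^sub>R z \<in> S" using assms(2-4) by (auto intro: conic_mul)
    moreover have "y + z \<in> open_segment (2 *\<^sub>R y) (2 *\<^sub>R z)"
      using False midpoint_in_open_segment[of "2 *\<^sub>R y" "2 *\<^sub>R z"]
      by (simp add: midpoint_def algebra_simps)
    ultimately show ?thesis using assms(1,5) unfolding face_of_def by blast
  qed
  from conic_mul[OF face_of_conic[OF assms(2,1)] this, of "1/2"] show ?thesis by simp
qed

lemma ray_face_of_convex_cone_hull:
  fixes B :: "'a::euclidean_space set"
  assumes "finite B" "independent B" "b \<in> B"
  shows "convex_cone hull {b} face_of convex_cone hull B"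
proof -
  obtain f where f: "linear f" "\<forall>x\<in>B. f x = (if x = b then (0::real) else 1)"
    using linear_independent_extend[OF assms(2), of "\<lambda>x. if x = b then 0 else 1"] by blast
  define a where "a = adjoint f 1"
  have fa: "f x = a \<bullet> x" for x
    using adjoint_works[OF f(1), of x 1] by (simp add: a_def inner_commute)
  have f_sum: "f (\<Sum>x\<in>B. \<mu> x *\<^sub>R x) = (\<Sum>x\<in>B - {b}. \<mu> x)" for \<mu>
  proof -
    have "f (\<Sum>x\<in>B. \<mu> x *\<^sub>R x) = (\<Sum>x\<in>B. \<mu> x * f x)"
      using f(1) by (simp add: linear_sum linear_scale)
    also have "\<dots> = (\<Sum>x\<in>B - {b}. \<mu> x)"
      using assms(1,3) f(2) by (simp add: sum.remove if_distrib sum.If_cases)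
    finally show ?thesis .
  qed
  have ray: "convex_cone hull {b} = convex_cone hull B \<inter> {x. a \<bullet> x = 0}"
  proof (intro equalityI subsetI)
    fix x assume "x \<in> convex_cone hull {b}"
    then obtain t where "x = t *\<^sub>R b" "0 \<le> t" by (auto simp: convex_cone_hull_singleton)
    then show "x \<in> convex_cone hull B \<inter> {x. a \<bullet> x = 0}"
      using assms(3) f by (auto simp: fa[symmetric] linear_scale intro: convex_cone_hull_mul hull_inc)
  next
    fix x assume "x \<in> convex_cone hull B \<inter> {x. a \<bullet> x = 0}"
    then obtain \<mu> where \<mu>: "\<forall>x\<in>B. 0 \<le> \<mu> x" "x = (\<Sum>x\<in>B. \<mu> x *\<^sub>R x)" "sum \<mu> (B - {b}) = 0"
      by (auto simp: convex_cone_hull_finite[OF assms(1)] fa[symmetric] f_sum)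
    then have "\<forall>y\<in>B - {b}. \<mu> y = 0"
      using assms(1) sum_nonneg_eq_0_iff[of "B - {b}" \<mu>] by auto
    then have "x = \<mu> b *\<^sub>R b" using \<mu>(2) assms(1,3) by (simp add: sum.remove)
    then show "x \<in> convex_cone hull {b}"
      using \<mu>(1) assms(3) by (auto simp: convex_cone_hull_singleton)
  qed
  have "0 \<le> a \<bullet> x" if "x \<in> convex_cone hull B" for x
    using that by (auto simp: convex_cone_hull_finite[OF assms(1)] fa[symmetric] f_sum intro!: sum_nonneg)
  then show ?thesis
    unfolding ray by (intro face_of_Int_supporting_hyperplane_ge convex_convex_cone_hull)
qed

lemma ray_face_of_convex_cone_hullE:
  fixes B :: "'a::euclidean_space set"
  assumes "finite B" "0 \<notin> B" "w \<noteq> 0" "convex_cone hull {w} face_of convex_cone hull B"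
  obtains b where "b \<in> B" "convex_cone hull {w} = convex_cone hull {b}"
proof -
  have "w \<in> convex_cone hull {w}" by (simp add: hull_inc)
  then have "w \<in> convex_cone hull B" using face_of_imp_subset[OF assms(4)] by blast
  then obtain \<mu> where \<mu>: "\<forall>b\<in>B. 0 \<le> \<mu> b" "w = (\<Sum>b\<in>B. \<mu> b *\<^sub>R b)"
    by (auto simp: convex_cone_hull_finite[OF assms(1)])
  have "\<exists>b\<in>B. \<mu> b \<noteq> 0"
  proof (rule ccontr)
    assume "\<not> (\<exists>b\<in>B. \<mu> b \<noteq> 0)"
    then show False using \<mu>(2) assms(3) by simp
  qed
  then obtain b where b: "b \<in> B" "0 < \<mu> b"
    using \<mu>(1) by (auto simp: less_le)
  have "\<mu> b *\<^sub>R b + (\<Sum>x\<in>B - {b}. \<mu> x *\<^sub>R x) = w"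
    using \<mu>(2) assms(1) b(1) by (simp add: sum.remove)
  then have "\<mu> b *\<^sub>R b + (\<Sum>x\<in>B - {b}. \<mu> x *\<^sub>R x) \<in> convex_cone hull {w}"
    by (simp add: hull_inc)
  moreover have "\<mu> b *\<^sub>R b \<in> convex_cone hull B"
    using b by (simp add: convex_cone_hull_mul hull_inc)
  moreover have "(\<Sum>x\<in>B - {b}. \<mu> x *\<^sub>R x) \<in> convex_cone hull B"
    using \<mu>(1) by (intro convex_cone_hull_sum) auto
  ultimately have "\<mu> b *\<^sub>R b \<in> convex_cone hull {w}"
    using face_of_conic_add[OF assms(4) conic_convex_cone_hull] by blast
  then obtain t where t: "0 \<le> t" "\<mu> b *\<^sub>R b = t *\<^sub>R w"
    by (auto simp: convex_cone_hull_singleton)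
  moreover have "t \<noteq> 0" using t(2) b assms(2) by auto
  ultimately have "0 < t" by simp
  have "b = (1 / \<mu> b) *\<^sub>R (\<mu> b *\<^sub>R b)" using b(2) by simp
  also have "\<dots> = (t / \<mu> b) *\<^sub>R w" using t(2) by simp
  finally have "convex_cone hull {b} = convex_cone hull {(t / \<mu> b) *\<^sub>R w}" by simp
  also have "\<dots> = convex_cone hull {w}"
    using \<open>0 < t\<close> b(2) by (simp add: convex_cone_hull_singleton_scaleR)
  finally show thesis using that b(1) by simp
qed

section \<open>Support functions and the Hausdorff distance\<close>

lemma support_fun_ge:
  fixes P :: "'a::euclidean_space set"
  assumes "bounded P" "x \<in> P"
  shows "x \<bullet> u \<le> support_fun P u"
proof -
  have "bdd_above ((\<lambda>x. x \<bullet> u) ` P)"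
    by (intro bounded_imp_bdd_above bounded_linear_image[OF assms(1)] bounded_linear_inner_left)
  then show ?thesis unfolding support_fun_def by (rule cSUP_upper[OF assms(2)])
qed

lemma support_fun_le:
  fixes P :: "'a::euclidean_space set"
  assumes "P \<noteq> {}" "\<And>x. x \<in> P \<Longrightarrow> x \<bullet> u \<le> M"
  shows "support_fun P u \<le> M"
  unfolding support_fun_def using assms by (rule cSUP_least)

lemma support_fun_normal_cone:
  fixes P :: "'a::euclidean_space set"
  assumes "F face_of P" "x0 \<in> F" "w \<in> normal_cone P F"
  shows "support_fun P w = x0 \<bullet> w"
proof -
  have "x0 \<in> P" using assms(1,2) face_of_imp_subset by blast
  moreover have "\<forall>y\<in>P. y \<bullet> w \<le> x0 \<bullet> w"
    using assms(2,3) by (auto simp: normal_cone_def inner_commute)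
  ultimately show ?thesis unfolding support_fun_def by (intro cSup_eq_maximum) auto
qed

lemma SUP_infdist_le_support_fun:
  fixes S T :: "'a::euclidean_space set"
  assumes "bounded S" "S \<noteq> {}" "closed T" "convex T" "T \<noteq> {}" "0 \<le> M"
    and "\<And>u. norm u = 1 \<Longrightarrow> support_fun S u - support_fun T u \<le> M"
  shows "(SUP a\<in>S. infdist a T) \<le> M"
proof (rule cSUP_least[OF assms(2)])
  fix a assume a: "a \<in> S"
  show "infdist a T \<le> M"
  proof (cases "a \<in> T")
    case True
    then show ?thesis using assms(6) by simp
  next
    case False
    define p where "p = closest_point T a"
    define d where "d = norm (a - p)"
    define u where "u = (1 / d) *\<^sub>R (a - p)"
    have "p \<in> T" unfolding p_def using closest_point_in_set[OF assms(3,5)] .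
    then have "0 < d" using False by (auto simp: d_def)
    then have "norm u = 1" by (simp add: u_def d_def)
    have "support_fun T u \<le> p \<bullet> u"
    proof (rule support_fun_le[OF assms(5)])
      fix y assume "y \<in> T"
      then have "(a - p) \<bullet> (y - p) \<le> 0"
        unfolding p_def using closest_point_dot[OF assms(4,3)] by blast
      then have "(y - p) \<bullet> u \<le> 0"
        using \<open>0 < d\<close> by (simp add: u_def inner_commute divide_nonpos_pos)
      then show "y \<bullet> u \<le> p \<bullet> u" by (simp add: inner_diff_left)
    qed
    have "infdist a T \<le> d" using infdist_le[OF \<open>p \<in> T\<close>] by (simp add: d_def dist_norm)
    also have "\<dots> = (a - p) \<bullet> u"
      using \<open>0 < d\<close> by (simp add: u_def d_def dot_square_norm power2_eq_square)
    also have "\<dots> \<le> support_fun S u - support_fun T u"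
      using support_fun_ge[OF assms(1) a, of u] \<open>support_fun T u \<le> p \<bullet> u\<close>
      by (simp add: inner_diff_left)
    also have "\<dots> \<le> M" using assms(7)[OF \<open>norm u = 1\<close>] .
    finally show ?thesis .
  qed
qed

lemma hausdorff_dist_le_support_fun:
  fixes S T :: "'a::euclidean_space set"
  assumes "compact S" "convex S" "S \<noteq> {}" "compact T" "convex T" "T \<noteq> {}"
    and "\<And>u. norm u = 1 \<Longrightarrow> \<bar>support_fun S u - support_fun T u\<bar> \<le> M"
  shows "hausdorff_dist S T \<le> M"
proof -
  obtain b :: 'a where "b \<in> Basis" using nonempty_Basis by blast
  then have "0 \<le> M" using assms(7)[of b] by simp
  have "(SUP a\<in>S. infdist a T) \<le> M"
    using assms(7) by (intro SUP_infdist_le_support_fun)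
      (auto simp: assms \<open>0 \<le> M\<close> compact_imp_bounded compact_imp_closed abs_le_iff)
  moreover have "(SUP b\<in>T. infdist b S) \<le> M"
    using assms(7) by (intro SUP_infdist_le_support_fun)
      (auto simp: assms \<open>0 \<le> M\<close> compact_imp_bounded compact_imp_closed abs_le_iff)
  ultimately show ?thesis by (simp add: hausdorff_dist_def)
qed

section \<open>Simplicial fans\<close>

lemma fan_convex_cone: "fan \<Delta> \<Longrightarrow> C \<in> \<Delta> \<Longrightarrow> convex_cone C"
  unfolding fan_def by blast

lemma fan_polyhedron: "fan \<Delta> \<Longrightarrow> C \<in> \<Delta> \<Longrightarrow> polyhedron C"
  unfolding fan_def by blast

lemma fan_face_mem: "fan \<Delta> \<Longrightarrow> C \<in> \<Delta> \<Longrightarrow> F face_of C \<Longrightarrow> F \<noteq> {} \<Longrightarrow> F \<in> \<Delta>"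
  unfolding fan_def by blast

lemma fan_Int_face_of: "fan \<Delta> \<Longrightarrow> C \<in> \<Delta> \<Longrightarrow> C' \<in> \<Delta> \<Longrightarrow> (C \<inter> C') face_of C"
  unfolding fan_def by blast

lemma simplicial_fan_imp_fan: "simplicial_fan \<Delta> \<Longrightarrow> fan \<Delta>"
  unfolding simplicial_fan_def by blast

lemma ray_generators_inj: "ray_generators \<Delta> v \<Longrightarrow> inj v"
  unfolding ray_generators_def inj_def by metis

lemma ray_generators_ray_eq:
  "ray_generators \<Delta> v \<Longrightarrow> convex_cone hull {v k} = convex_cone hull {v l} \<Longrightarrow> k = l"
  unfolding ray_generators_def inj_def by blast

lemma fan_ray_of_generator:
  fixes \<Delta> :: "'a::euclidean_space set set"
  assumes "fan \<Delta>" "ray_generators \<Delta> v" "convex_cone hull B \<in> \<Delta>"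
    and "finite B" "independent B" "b \<in> B"
  obtains k where "convex_cone hull {b} = convex_cone hull {v k}"
proof -
  have "convex_cone hull {b} \<in> \<Delta>"
    using assms by (intro fan_face_mem[OF assms(1,3)] ray_face_of_convex_cone_hull convex_cone_hull_nonempty)
  moreover have "aff_dim (convex_cone hull {b}) = 1"
    using assms(5,6) dependent_zero by (intro aff_dim_convex_cone_hull_singleton) blast
  ultimately show thesis
    using assms(2) that unfolding ray_generators_def by blast
qed

lemma fan_generator_of_ray:
  fixes \<Delta> :: "'a::euclidean_space set set"
  assumes "fan \<Delta>" "ray_generators \<Delta> v" "convex_cone hull B \<in> \<Delta>"
    and "finite B" "independent B" "v k \<in> convex_cone hull B"
  obtains b where "b \<in> B" "convex_cone hull {v k} = convex_cone hull {b}"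
proof -
  have "convex_cone hull {v k} \<in> \<Delta>"
    using assms(2) unfolding ray_generators_def by blast
  moreover have "convex_cone hull {v k} \<subseteq> convex_cone hull B"
    using assms(6) by (simp add: convex_cone_convex_cone_hull hull_minimal)
  ultimately have "convex_cone hull {v k} face_of convex_cone hull B"
    using fan_Int_face_of[OF assms(1,3)] by (metis inf.absorb_iff2)
  moreover have "0 \<notin> B" "v k \<noteq> 0"
    using assms(2,5) dependent_zero unfolding ray_generators_def by blast+
  ultimately show thesis
    using ray_face_of_convex_cone_hullE[OF assms(4)] that by blast
qed

(* Every generator b of sigma spans a face, hence a ray cone{v k} of Delta; conversely every ray
   cone{v k} inside sigma is a face of sigma, hence spanned by a generator. The second
   correspondence is injective, so there are at most card B of the v k in sigma. *)
lemma simplicial_fan_cone_generators: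
  fixes \<Delta> :: "'a::euclidean_space set set"
  assumes "simplicial_fan \<Delta>" "ray_generators \<Delta> v" "\<sigma> \<in> \<Delta>"
  shows "\<sigma> = convex_cone hull (v ` {k. v k \<in> \<sigma>})" "independent (v ` {k. v k \<in> \<sigma>})"
proof -
  define I where "I = {k. v k \<in> \<sigma>}"
  have fan: "fan \<Delta>" using assms(1) by (rule simplicial_fan_imp_fan)
  obtain B where B: "finite B" "independent B" "\<sigma> = convex_cone hull B"
    using assms(1,3) unfolding simplicial_fan_def by blast
  have gen_ray: "\<exists>k\<in>I. convex_cone hull {b} = convex_cone hull {v k}" if b: "b \<in> B" for b
  proof -
    obtain k where k: "convex_cone hull {b} = convex_cone hull {v k}"
      using fan_ray_of_generator[OF fan assms(2) _ B(1,2) b] assms(3) B(3) by blast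
    have "v k \<in> convex_cone hull {b}" by (simp add: k hull_inc)
    also have "\<dots> \<subseteq> \<sigma>" using b B(3) by (simp add: hull_mono)
    finally show ?thesis using k by (auto simp: I_def)
  qed
  have "B \<subseteq> convex_cone hull (v ` I)"
  proof
    fix b assume "b \<in> B"
    then obtain k where "k \<in> I" "b \<in> convex_cone hull {v k}"
      using gen_ray by (metis hull_inc singletonI)
    moreover have "convex_cone hull {v k} \<subseteq> convex_cone hull (v ` I)"
      using \<open>k \<in> I\<close> by (intro hull_mono) auto
    ultimately show "b \<in> convex_cone hull (v ` I)" by blast
  qed
  then have "\<sigma> \<subseteq> convex_cone hull (v ` I)"
    unfolding B(3) by (simp add: convex_cone_convex_cone_hull hull_minimal)
  moreover have "convex_cone hull (v ` I) \<subseteq> \<sigma>"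
    using fan_convex_cone[OF fan assms(3)] by (intro hull_minimal) (auto simp: I_def)
  ultimately show "\<sigma> = convex_cone hull (v ` {k. v k \<in> \<sigma>})" by (simp add: I_def)
  have "\<forall>k\<in>I. \<exists>b\<in>B. convex_cone hull {v k} = convex_cone hull {b}"
    using fan_generator_of_ray[OF fan assms(2) _ B(1,2)] assms(3) B(3) by (metis I_def mem_Collect_eq)
  then obtain r where r: "\<And>k. k \<in> I \<Longrightarrow> r k \<in> B \<and> convex_cone hull {v k} = convex_cone hull {r k}"
    by metis
  have "inj_on r I"
  proof (rule inj_onI)
    fix k l assume "k \<in> I" "l \<in> I" "r k = r l"
    then have "convex_cone hull {v k} = convex_cone hull {v l}" using r by metis
    then show "k = l" by (rule ray_generators_ray_eq[OF assms(2)])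
  qed
  moreover have "r ` I \<subseteq> B" using r by blast
  ultimately have "finite I" "card I \<le> card B"
    using B(1) by (auto intro: inj_on_finite card_inj_on_le)
  then have "card (v ` I) \<le> card B" using card_image_le le_trans by blast
  also have "\<dots> = dim (span B)" using dim_span_eq_card_independent[OF B(2)] by simp
  finally have "card (v ` I) \<le> dim (span B)" .
  moreover have "v ` I \<subseteq> span B"
    using convex_cone_hull_subset_span[of B] B(3) by (auto simp: I_def)
  moreover have "span B \<subseteq> span (v ` I)"
    using \<open>B \<subseteq> convex_cone hull (v ` I)\<close> convex_cone_hull_subset_span[of "v ` I"]
    by (intro span_minimal) auto
  ultimately show "independent (v ` {k. v k \<in> \<sigma>})"
    unfolding I_def[symmetric] using \<open>finite I\<close> by (intro card_le_dim_spanning[of _ "span B"]) auto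
qed

lemma card_simplicial_fan_generators:
  fixes \<Delta> :: "'a::euclidean_space set set"
  assumes "simplicial_fan \<Delta>" "ray_generators \<Delta> v" "\<sigma> \<in> \<Delta>"
  shows "card {k. v k \<in> \<sigma>} \<le> DIM('a)"
proof -
  have "card {k. v k \<in> \<sigma>} = card (v ` {k. v k \<in> \<sigma>})"
    using ray_generators_inj[OF assms(2)] by (simp add: card_image inj_on_def inj_def)
  also have "\<dots> \<le> DIM('a)"
    using simplicial_fan_cone_generators(2)[OF assms] by (rule independent_bound[THEN conjunct2])
  finally show ?thesis .
qed

(* A face of C of least dimension containing u has u in its relative interior,
   since otherwise u would lie on one of its facets. *)
lemma fan_rel_interior_cover:
  fixes \<Delta> :: "'a::euclidean_space set set"
  assumes "fan \<Delta>" "\<Union>\<Delta> = UNIV"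
  obtains \<sigma> where "\<sigma> \<in> \<Delta>" "u \<in> rel_interior \<sigma>"
proof -
  obtain C where C: "C \<in> \<Delta>" "u \<in> C" using assms(2) by blast
  have polyC: "polyhedron C" using fan_polyhedron[OF assms(1) C(1)] .
  let ?P = "\<lambda>F. F face_of C \<and> u \<in> F"
  have "?P C" using C polyC by (simp add: face_of_refl polyhedron_imp_convex)
  then obtain F where F: "?P F" and Fmin: "\<And>G. ?P G \<Longrightarrow> nat (aff_dim F + 1) \<le> nat (aff_dim G + 1)"
    using ex_has_least_nat[of ?P C "\<lambda>F. nat (aff_dim F + 1)"] by blast
  have "u \<in> rel_interior F"
  proof (rule ccontr)
    assume "u \<notin> rel_interior F"
    then have "u \<in> rel_frontier F" using F closure_subset unfolding rel_frontier_def by blast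
    moreover have "polyhedron F" using face_of_polyhedron_polyhedron polyC F by blast
    ultimately obtain G where G: "G facet_of F" "u \<in> G" using rel_frontier_of_polyhedron by blast
    then have "G face_of C" using F face_of_trans unfolding facet_of_def by blast
    then have "nat (aff_dim F + 1) \<le> nat (aff_dim G + 1)" using Fmin G(2) by blast
    moreover have "aff_dim G = aff_dim F - 1" "G \<noteq> {}" using G(1) unfolding facet_of_def by auto
    moreover have "aff_dim G \<ge> 0" using \<open>G \<noteq> {}\<close> aff_dim_negative_iff[of G] by linarith
    ultimately show False by linarith
  qed
  moreover have "F \<in> \<Delta>" using fan_face_mem[OF assms(1) C(1)] F by blast
  ultimately show thesis using that by blast
qed

lemma fan_rel_interior_unique:
  fixes \<Delta> :: "'a::euclidean_space set set"
  assumes "fan \<Delta>" "\<sigma> \<in> \<Delta>" "\<sigma>' \<in> \<Delta>" "u \<in> rel_interior \<sigma>" "u \<in> rel_interior \<sigma>'"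
  shows "\<sigma> = \<sigma>'"
proof -
  have "u \<in> \<sigma> \<inter> \<sigma>'" using assms(4,5) rel_interior_subset by blast
  then have "\<sigma> \<subseteq> \<sigma> \<inter> \<sigma>'" "\<sigma>' \<subseteq> \<sigma>' \<inter> \<sigma>"
    using subset_of_face_of[OF fan_Int_face_of[OF assms(1)] subset_refl] assms by blast+
  then show ?thesis by blast
qed

lemma normal_fan_cover:
  fixes Q :: "'a::euclidean_space set"
  assumes "polytope Q" "Q \<noteq> {}"
  shows "\<Union>(normal_fan Q) = UNIV"
proof -
  have "c \<in> \<Union>(normal_fan Q)" for c
  proof -
    have "continuous_on Q (\<lambda>x. c \<bullet> x)" by (intro continuous_intros)
    then obtain x0 where x0: "x0 \<in> Q" "\<forall>y\<in>Q. c \<bullet> y \<le> c \<bullet> x0"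
      using continuous_attains_sup[OF polytope_imp_compact[OF assms(1)] assms(2)] by blast
    define F where "F = Q \<inter> {x. c \<bullet> x = c \<bullet> x0}"
    have "F face_of Q" unfolding F_def
      using x0 polytope_imp_convex[OF assms(1)] by (intro face_of_Int_supporting_hyperplane_le) auto
    moreover have "F \<noteq> {}" "c \<in> normal_cone Q F" using x0 by (auto simp: normal_cone_def F_def)
    ultimately show ?thesis unfolding normal_fan_def by blast
  qed
  then show ?thesis by blast
qed

lemma polytopal_fan_cover: "polytopal_fan \<Delta> \<Longrightarrow> \<Union>\<Delta> = UNIV"
  using normal_fan_cover unfolding polytopal_fan_def by blast

section \<open>Coordinates with respect to the ray generators\<close>

definition generator_coords :: "('n::finite \<Rightarrow> 'a::real_vector) \<Rightarrow> 'a set \<Rightarrow> 'a \<Rightarrow> ('n \<Rightarrow> real) \<Rightarrow> bool"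
  where "generator_coords v \<sigma> u lam \<longleftrightarrow>
    (\<forall>k. v k \<notin> \<sigma> \<longrightarrow> lam k = 0) \<and> (\<forall>k. 0 \<le> lam k) \<and> u = (\<Sum>k\<in>UNIV. lam k *\<^sub>R v k)"

lemma generator_coords_sum:
  "generator_coords v \<sigma> u lam \<Longrightarrow> u = (\<Sum>k\<in>{k. v k \<in> \<sigma>}. lam k *\<^sub>R v k)"
  unfolding generator_coords_def by (metis (mono_tags) sum.mono_neutral_left finite subset_UNIV
      DiffD2 mem_Collect_eq scale_zero_left)

lemma generator_coords_mem:
  assumes "convex_cone \<sigma>" "generator_coords v \<sigma> u lam"
  shows "u \<in> \<sigma>"
proof -
  have "(\<Sum>k\<in>{k. v k \<in> \<sigma>}. lam k *\<^sub>R v k) \<in> convex_cone hull \<sigma>"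
    using assms(2) unfolding generator_coords_def by (intro convex_cone_hull_sum) auto
  then show ?thesis
    using generator_coords_sum[OF assms(2)] hull_same[of convex_cone, OF assms(1)] by simp
qed

lemma simplicial_fan_generator_coords:
  fixes \<Delta> :: "'a::euclidean_space set set" and v :: "'n::finite \<Rightarrow> 'a"
  assumes "simplicial_fan \<Delta>" "ray_generators \<Delta> v" "\<sigma> \<in> \<Delta>" "u \<in> \<sigma>"
  obtains lam where "generator_coords v \<sigma> u lam"
proof -
  define I where "I = {k. v k \<in> \<sigma>}"
  have inj: "inj_on v I" using ray_generators_inj[OF assms(2)] by (simp add: inj_on_def inj_def)
  have "u \<in> convex_cone hull (v ` I)"
    using simplicial_fan_cone_generators(1)[OF assms(1-3)] assms(4) by (simp add: I_def)
  then obtain \<mu> where \<mu>: "\<forall>x\<in>v ` I. 0 \<le> \<mu> x" "u = (\<Sum>x\<in>v ` I. \<mu> x *\<^sub>R x)"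
    by (auto simp: convex_cone_hull_finite)
  define lam where "lam k = (if k \<in> I then \<mu> (v k) else 0)" for k
  have "(\<Sum>k\<in>UNIV. lam k *\<^sub>R v k) = (\<Sum>k\<in>UNIV. if k \<in> I then \<mu> (v k) *\<^sub>R v k else 0)"
    by (intro sum.cong) (auto simp: lam_def)
  also have "\<dots> = (\<Sum>k\<in>I. \<mu> (v k) *\<^sub>R v k)"
    by (simp add: sum.If_cases)
  also have "\<dots> = u" using \<mu>(2) sum.reindex[OF inj, of "\<lambda>x. \<mu> x *\<^sub>R x"] by simp
  finally have "generator_coords v \<sigma> u lam"
    using \<mu>(1) unfolding generator_coords_def by (auto simp: lam_def I_def)
  then show thesis by (rule that)
qed

lemma independent_image_coeffs_eq:
  fixes v :: "'n \<Rightarrow> 'a::real_vector"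
  assumes "independent (v ` I)" "inj_on v I" "finite I"
    and "(\<Sum>k\<in>I. a k *\<^sub>R v k) = (\<Sum>k\<in>I. b k *\<^sub>R v k)" "k \<in> I"
  shows "a k = b k"
proof -
  define c where "c x = a (inv_into I v x) - b (inv_into I v x)" for x
  have "(\<Sum>x\<in>v ` I. c x *\<^sub>R x) = (\<Sum>k\<in>I. (a k - b k) *\<^sub>R v k)"
    using assms(2) by (simp add: sum.reindex c_def)
  also have "\<dots> = 0" using assms(4) by (simp add: scaleR_diff_left sum_subtractf)
  finally have "c (v k) = 0"
    using assms(1,3,5) dependent_finite[of "v ` I"] by auto
  then show ?thesis using assms(2,5) by (simp add: c_def)
qed

lemma fan_coord_eqI:
  fixes \<Delta> :: "'a::euclidean_space set set" and v :: "'n::finite \<Rightarrow> 'a"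
  assumes "simplicial_fan \<Delta>" "ray_generators \<Delta> v" "\<sigma> \<in> \<Delta>" "u \<in> rel_interior \<sigma>"
    and "generator_coords v \<sigma> u lam"
  shows "fan_coord \<Delta> v u = lam"
proof -
  define I where "I = {k. v k \<in> \<sigma>}"
  have "(THE \<sigma>. \<sigma> \<in> \<Delta> \<and> u \<in> rel_interior \<sigma>) = \<sigma>"
    using assms(3,4) fan_rel_interior_unique[OF simplicial_fan_imp_fan[OF assms(1)]]
    by (intro the_equality) blast+
  moreover have "(THE lam. (\<forall>k. k \<notin> I \<longrightarrow> lam k = 0) \<and> u = (\<Sum>k\<in>I. lam k *\<^sub>R v k)) = lam"
  proof (rule the_equality)
    show "(\<forall>k. k \<notin> I \<longrightarrow> lam k = 0) \<and> u = (\<Sum>k\<in>I. lam k *\<^sub>R v k)"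
      using assms(5) generator_coords_sum[OF assms(5)] by (auto simp: generator_coords_def I_def)
  next
    fix lam' assume lam': "(\<forall>k. k \<notin> I \<longrightarrow> lam' k = 0) \<and> u = (\<Sum>k\<in>I. lam' k *\<^sub>R v k)"
    have "lam' k = lam k" if "k \<in> I" for k
    proof (rule independent_image_coeffs_eq[where v = v and I = I and a = lam' and b = lam])
      show "independent (v ` I)"
        using simplicial_fan_cone_generators(2)[OF assms(1-3)] by (simp add: I_def)
      show "inj_on v I" using ray_generators_inj[OF assms(2)] by (simp add: inj_on_def inj_def)
      show "(\<Sum>k\<in>I. lam' k *\<^sub>R v k) = (\<Sum>k\<in>I. lam k *\<^sub>R v k)"
        using lam' generator_coords_sum[OF assms(5)] by (simp add: I_def)
    qed (use that in auto)
    moreover have "lam' k = lam k" if "k \<notin> I" for k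
      using that lam' assms(5) by (simp add: generator_coords_def I_def)
    ultimately show "lam' = lam" by blast
  qed
  ultimately show ?thesis unfolding fan_coord_def Let_def I_def by simp
qed

lemma norm_le_sqrt_card_nonzero:
  fixes y :: "real^'n"
  assumes "\<And>i. \<bar>y $ i\<bar> \<le> c" "card {i. y $ i \<noteq> 0} \<le> m"
  shows "norm y \<le> sqrt (real m) * c"
proof -
  define J where "J = {i. y $ i \<noteq> 0}"
  have "0 \<le> c" using assms(1) abs_ge_zero order_trans by blast
  have "norm y = L2_set (\<lambda>i. \<bar>y $ i\<bar>) UNIV" by (simp add: norm_vec_def)
  also have "\<dots> = L2_set (\<lambda>i. \<bar>y $ i\<bar>) J"
    unfolding L2_set_def J_def by (intro arg_cong[where f = sqrt] sum.mono_neutral_right) auto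
  also have "\<dots> \<le> L2_set (\<lambda>i. c) J" by (intro L2_set_mono) (auto simp: assms(1))
  also have "\<dots> = sqrt (real (card J)) * c" using \<open>0 \<le> c\<close> by (simp add: L2_set_constant)
  also have "\<dots> \<le> sqrt (real m) * c"
    using assms(2) \<open>0 \<le> c\<close> by (simp add: J_def mult_right_mono)
  finally show ?thesis .
qed

lemma generator_coords_bounded:
  fixes v :: "'n::finite \<Rightarrow> 'a::euclidean_space"
  assumes "independent (v ` {k. v k \<in> \<sigma>})" "inj v"
  shows "\<exists>K. \<forall>u lam. generator_coords v \<sigma> u lam \<longrightarrow> lam i \<le> K * norm u"
proof (cases "v i \<in> \<sigma>")
  case False
  then show ?thesis by (auto simp: generator_coords_def intro!: exI[of _ 0])
next
  case True
  obtain g :: "'a \<Rightarrow> real" where g: "linear g" "\<forall>x\<in>v ` {k. v k \<in> \<sigma>}. g x = (if x = v i then 1 else 0)"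
    using linear_independent_extend[OF assms(1), of "\<lambda>x. if x = v i then 1 else 0"] by blast
  obtain K where K: "\<And>x. norm (g x) \<le> K * norm x" using linear_bounded[OF g(1)] by blast
  have "lam i \<le> K * norm u" if "generator_coords v \<sigma> u lam" for u lam
  proof -
    have "g u = (\<Sum>k\<in>UNIV. lam k * g (v k))"
      using that g(1) by (simp add: generator_coords_def linear_sum linear_scale)
    also have "\<dots> = (\<Sum>k\<in>UNIV. if k = i then lam k else 0)"
      using that g(2) True assms(2) by (intro sum.cong) (auto simp: generator_coords_def inj_eq)
    also have "\<dots> = lam i" by simp
    finally have "lam i = g u" ..
    also have "\<dots> \<le> K * norm u" using K[of u] by simp
    finally show ?thesis .
  qed
  then show ?thesis by blast
qed

lemma support_fun_generator_coords:
  fixes P :: "'a::euclidean_space set" and v :: "'n::finite \<Rightarrow> 'a"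
  assumes "refines \<Delta> (normal_fan P)" "\<sigma> \<in> \<Delta>" "convex_cone \<sigma>" "generator_coords v \<sigma> u lam"
  shows "support_fun P u = (\<Sum>k\<in>UNIV. lam k * support_fun P (v k))"
proof -
  obtain F where F: "F face_of P" "F \<noteq> {}" "\<sigma> \<subseteq> normal_cone P F"
    using assms(1,2) unfolding refines_def normal_fan_def by blast
  then obtain x0 where "x0 \<in> F" by blast
  have "u \<in> \<sigma>" using generator_coords_mem[OF assms(3,4)] .
  then have "support_fun P u = x0 \<bullet> u"
    using F \<open>x0 \<in> F\<close> by (intro support_fun_normal_cone) auto
  also have "\<dots> = (\<Sum>k\<in>UNIV. lam k * (x0 \<bullet> v k))"
    using assms(4) by (simp add: generator_coords_def inner_sum_right)
  also have "\<dots> = (\<Sum>k\<in>UNIV. lam k * support_fun P (v k))"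
  proof (intro sum.cong refl)
    fix k
    show "lam k * (x0 \<bullet> v k) = lam k * support_fun P (v k)"
    proof (cases "v k \<in> \<sigma>")
      case True
      then show ?thesis using F \<open>x0 \<in> F\<close> support_fun_normal_cone[OF F(1) \<open>x0 \<in> F\<close>] by auto
    qed (use assms(4) in \<open>simp add: generator_coords_def\<close>)
  qed
  finally show ?thesis .
qed

context
  fixes \<Delta> :: "'a::euclidean_space set set" and v :: "'n::finite \<Rightarrow> 'a"
  assumes simplicial: "simplicial_fan \<Delta>" and polytopal: "polytopal_fan \<Delta>"
    and generators: "ray_generators \<Delta> v"
begin

lemma fan_coord_generator_coords:
  obtains \<sigma> where "\<sigma> \<in> \<Delta>" "generator_coords v \<sigma> u (fan_coord \<Delta> v u)"
proof -
  obtain \<sigma> where \<sigma>: "\<sigma> \<in> \<Delta>" "u \<in> rel_interior \<sigma>"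
    using fan_rel_interior_cover[OF simplicial_fan_imp_fan[OF simplicial] polytopal_fan_cover[OF polytopal]] .
  moreover obtain lam where "generator_coords v \<sigma> u lam"
    using simplicial_fan_generator_coords[OF simplicial generators \<sigma>(1)] \<sigma>(2) rel_interior_subset by blast
  ultimately show thesis
    using fan_coord_eqI[OF simplicial generators] that by metis
qed

lemma fan_coord_nonneg: "0 \<le> fan_coord \<Delta> v u i"
  using fan_coord_generator_coords by (metis generator_coords_def)

lemma card_fan_coord_nonzero: "card {i. fan_coord \<Delta> v u i \<noteq> 0} \<le> DIM('a)"
proof -
  obtain \<sigma> where \<sigma>: "\<sigma> \<in> \<Delta>" "generator_coords v \<sigma> u (fan_coord \<Delta> v u)"
    using fan_coord_generator_coords .
  then have "{i. fan_coord \<Delta> v u i \<noteq> 0} \<subseteq> {k. v k \<in> \<sigma>}"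
    unfolding generator_coords_def by blast
  then have "card {i. fan_coord \<Delta> v u i \<noteq> 0} \<le> card {k. v k \<in> \<sigma>}"
    by (intro card_mono) auto
  also have "\<dots> \<le> DIM('a)"
    using card_simplicial_fan_generators[OF simplicial generators \<sigma>(1)] .
  finally show ?thesis .
qed

lemma bdd_above_fan_coord: "bdd_above {fan_coord \<Delta> v u i | u i. norm u = 1}"
proof -
  have "\<forall>p\<in>\<Delta> \<times> UNIV. \<exists>K. \<forall>u lam. generator_coords v (fst p) u lam \<longrightarrow> lam (snd p) \<le> K * norm u"
    using simplicial_fan_cone_generators(2)[OF simplicial generators] ray_generators_inj[OF generators]
    by (auto intro!: generator_coords_bounded)
  then obtain K where K: "\<And>\<sigma> i u lam. \<sigma> \<in> \<Delta> \<Longrightarrow> generator_coords v \<sigma> u lam \<Longrightarrow> lam i \<le> K (\<sigma>, i) * norm u"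
    by (metis (no_types, lifting) SigmaI UNIV_I bchoice fst_conv snd_conv)
  have "finite (K ` (\<Delta> \<times> UNIV))"
    using simplicial_fan_imp_fan[OF simplicial] by (simp add: fan_def)
  show ?thesis
  proof (rule bdd_aboveI)
    fix x assume "x \<in> {fan_coord \<Delta> v u i | u i. norm u = 1}"
    then obtain u i where x: "x = fan_coord \<Delta> v u i" "norm u = 1" by blast
    obtain \<sigma> where \<sigma>: "\<sigma> \<in> \<Delta>" "generator_coords v \<sigma> u (fan_coord \<Delta> v u)"
      using fan_coord_generator_coords .
    have "x \<le> K (\<sigma>, i)" using K[OF \<sigma>, of i] x by simp
    also have "\<dots> \<le> Max (K ` (\<Delta> \<times> UNIV))"
      using \<open>finite (K ` (\<Delta> \<times> UNIV))\<close> \<sigma>(1) by (intro Max_ge) auto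
    finally show "x \<le> Max (K ` (\<Delta> \<times> UNIV))" .
  qed
qed

lemma fan_coord_le_fan_const: "norm u = 1 \<Longrightarrow> fan_coord \<Delta> v u i \<le> fan_const \<Delta> v"
  unfolding fan_const_def by (intro cSup_upper bdd_above_fan_coord) auto

lemma norm_fan_coord_le:
  assumes "norm u = 1"
  shows "norm (\<chi> i. fan_coord \<Delta> v u i) \<le> sqrt (real DIM('a)) * fan_const \<Delta> v"
  using fan_coord_nonneg fan_coord_le_fan_const[OF assms] card_fan_coord_nonzero
  by (intro norm_le_sqrt_card_nonzero) auto

lemma support_fun_eq_fan_coord:
  assumes "refines \<Delta> (normal_fan P)"
  shows "support_fun P u = (\<Sum>k\<in>UNIV. fan_coord \<Delta> v u k * support_fun P (v k))"
proof -
  obtain \<sigma> where "\<sigma> \<in> \<Delta>" "generator_coords v \<sigma> u (fan_coord \<Delta> v u)"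
    using fan_coord_generator_coords .
  then show ?thesis
    using support_fun_generator_coords[OF assms] fan_convex_cone[OF simplicial_fan_imp_fan[OF simplicial]]
    by blast
qed

lemma Ph_support_fun_eq:
  assumes "polytope P" "P \<noteq> {}" "refines \<Delta> (normal_fan P)" "\<And>i. h $ i = support_fun P (v i)"
  shows "Ph v h = P"
proof
  show "P \<subseteq> Ph v h"
    unfolding Ph_def using assms(4) support_fun_ge[OF polytope_imp_bounded[OF assms(1)]] by auto
next
  show "Ph v h \<subseteq> P"
  proof
    fix x assume x: "x \<in> Ph v h"
    show "x \<in> P"
    proof (rule ccontr)
      assume "x \<notin> P"
      then obtain a b where ab: "a \<bullet> x < b" "\<forall>y\<in>P. b < a \<bullet> y"
        using separating_hyperplane_closed_point[OF polytope_imp_convex[OF assms(1)]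
            polytope_imp_closed[OF assms(1)]] by blast
      obtain \<sigma> where "generator_coords v \<sigma> (- a) (fan_coord \<Delta> v (- a))"
        using fan_coord_generator_coords .
      then have "x \<bullet> (- a) = x \<bullet> (\<Sum>k\<in>UNIV. fan_coord \<Delta> v (- a) k *\<^sub>R v k)"
        unfolding generator_coords_def by (intro arg_cong[where f = "inner x"]) blast
      also have "\<dots> = (\<Sum>k\<in>UNIV. fan_coord \<Delta> v (- a) k * (x \<bullet> v k))"
        by (simp add: inner_sum_right)
      also have "\<dots> \<le> (\<Sum>k\<in>UNIV. fan_coord \<Delta> v (- a) k * support_fun P (v k))"
      proof (rule sum_mono, rule mult_left_mono)
        fix k
        show "x \<bullet> v k \<le> support_fun P (v k)" using x assms(4) unfolding Ph_def by simp
        show "0 \<le> fan_coord \<Delta> v (- a) k" by (rule fan_coord_nonneg)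
      qed
      also have "\<dots> = support_fun P (- a)"
        by (rule support_fun_eq_fan_coord[OF assms(3), symmetric])
      also have "\<dots> \<le> - b"
        using ab(2) assms(2) by (intro support_fun_le) (auto simp: inner_commute less_imp_le)
      finally show False using ab(1) by (simp add: inner_commute)
    qed
  qed
qed

lemma deformation_cone_support_fun:
  assumes "h \<in> deformation_cone \<Delta> v"
  shows "polytope (Ph v h)" "Ph v h \<noteq> {}"
    and "support_fun (Ph v h) u = (\<chi> i. fan_coord \<Delta> v u i) \<bullet> h"
proof -
  obtain P where P: "polytope P" "P \<noteq> {}" "refines \<Delta> (normal_fan P)" "\<And>i. h $ i = support_fun P (v i)"
    using assms unfolding deformation_cone_def by blast
  have "Ph v h = P" using Ph_support_fun_eq[OF P] .
  then show "polytope (Ph v h)" "Ph v h \<noteq> {}" using P(1,2) by simp_all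
  have "support_fun P u = (\<Sum>k\<in>UNIV. fan_coord \<Delta> v u k * h $ k)"
    unfolding P(4) by (rule support_fun_eq_fan_coord[OF P(3)])
  then show "support_fun (Ph v h) u = (\<chi> i. fan_coord \<Delta> v u i) \<bullet> h"
    using \<open>Ph v h = P\<close> by (simp add: inner_vec_def)
qed

end

theorem lemma2p5:
  fixes \<Delta> :: "'a::euclidean_space set set" and v :: "'n::finite \<Rightarrow> 'a"
    and h h' :: "real^'n"
  assumes "simplicial_fan \<Delta>" and "polytopal_fan \<Delta>" and "ray_generators \<Delta> v"
    and "h \<in> deformation_cone \<Delta> v" and "h' \<in> deformation_cone \<Delta> v"
  shows "hausdorff_dist (Ph v h) (Ph v h') \<le> sqrt (real DIM('a)) * fan_const \<Delta> v * norm (h - h')"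
proof (rule hausdorff_dist_le_support_fun)
  note P = deformation_cone_support_fun[OF assms(1-3)]
  show "compact (Ph v h)" "convex (Ph v h)" "Ph v h \<noteq> {}"
    and "compact (Ph v h')" "convex (Ph v h')" "Ph v h' \<noteq> {}"
    using P(1,2) assms(4,5) by (auto intro: polytope_imp_compact polytope_imp_convex)
  fix u :: 'a assume "norm u = 1"
  have "\<bar>support_fun (Ph v h) u - support_fun (Ph v h') u\<bar> = \<bar>(\<chi> i. fan_coord \<Delta> v u i) \<bullet> (h - h')\<bar>"
    using P(3) assms(4,5) by (simp add: inner_diff_right)
  also have "\<dots> \<le> norm (\<chi> i. fan_coord \<Delta> v u i) * norm (h - h')"
    by (rule Cauchy_Schwarz_ineq2)
  also have "\<dots> \<le> sqrt (real DIM('a)) * fan_const \<Delta> v * norm (h - h')"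
    using norm_fan_coord_le[OF assms(1-3) \<open>norm u = 1\<close>] by (simp add: mult_right_mono)
  finally show "\<bar>support_fun (Ph v h) u - support_fun (Ph v h') u\<bar>
      \<le> sqrt (real DIM('a)) * fan_const \<Delta> v * norm (h - h')" .
qed

end
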